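(* Let $\|\cdot\|$ be a submultiplicative matrix norm on $\mathbb{C}^{m\times m}$, let $n\ge 2$, and let $$A=\begin{bmatrix} A_1 & B_1 & & & \\ C_1 & A_2 & B_2 & & \\ & \ddots & \ddots & \ddots & \\ & & C_{n-2} & A_{n-1} & B_{n-1}\\ & & & C_{n-1} & A_n\end{bmatrix},\qquad A_i,B_i,C_i\in\mathbb{C}^{m\times m},$$ be a block tridiagonal matrix such that $A$ is nonsingular, $B_i$ and $C_i$ are nonsingular for $i=1,\dots,n-1$, $A$ is row block diagonally dominant with respect to $\|\cdot\|$, and $$\|A_1^{-1}B_1\|<1\quad\text{and}\quad \|A_n^{-1}C_{n-1}\|<1.$$ Let $U_i,Y_i$ ($i=1,\dots,n$) be the matrices defined by the recurrences in the context. Then the sequence $\{\|U_i\|\}_{i=1}^n$ is strictly increasing and the sequence $\{\|Y_i\|\}_{i=1}^n$ is strictly decreasing.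
   Context: Row block diagonal dominance: a block matrix $A=[A_{ij}]$ with blocks $A_{ij}\in\mathbb{C}^{m\times m}$, $i,j=1,\dots,n$, is called row block diagonally dominant (with respect to $\|\cdot\|$) if all diagonal blocks $A_{ii}$ are nonsingular and $\sum_{j\ne i}\|A_{ii}^{-1}A_{ij}\|\le 1$ for $i=1,\dots,n$. For the block tridiagonal $A$ above (block $(i,i)$ is $A_i$, block $(i,i+1)$ is $B_i$, block $(i+1,i)$ is $C_i$), with the convention $C_0=B_n=0$, this means: every $A_i$ is nonsingular and $\|A_i^{-1}C_{i-1}\|+\|A_i^{-1}B_i\|\le 1$ for $i=1,\dots,n$. The matrices $U_i,V_i,X_i,Y_i$ are defined recursively by $U_1=I$, $U_2=-B_1^{-1}A_1U_1$, $U_i=-B_{i-1}^{-1}(C_{i-2}U_{i-2}+A_{i-1}U_{i-1})$ for $i=3,\dots,n$; $V_n=(A_nU_n+C_{n-1}U_{n-1})^{-1}$, $V_{n-1}=-V_nA_nB_{n-1}^{-1}$, $V_i=-(V_{i+1}A_{i+1}+V_{i+2}C_{i+1})B_i^{-1}$ for $i=n-2,\dots,1$; $X_1=I$, $X_2=-X_1A_1C_1^{-1}$, $X_i=-(X_{i-2}B_{i-2}+X_{i-1}A_{i-1})C_{i-1}^{-1}$ for $i=3,\dots,n$; $Y_n=(X_nA_n+X_{n-1}B_{n-1})^{-1}$, $Y_{n-1}=-C_{n-1}^{-1}A_nY_n$, $Y_i=-C_i^{-1}(A_{i+1}Y_{i+1}+B_{i+1}Y_{i+2})$ for $i=n-2,\dots,1$.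 (It is known, by a result of Ikebe, that when $A$ and all $B_i,C_i$ are nonsingular, the inverses appearing here exist, and $A^{-1}=[Z_{ij}]$ with $Z_{ij}=U_iV_j$ for $i\le j$ and $Z_{ij}=Y_iX_j$ for $i\ge j$.) *)

theory Defs
  imports Complex_Main "Jordan_Normal_Form.Matrix"
begin

text \<open>Matrix inverse of a square matrix (meaningful when the matrix is nonsingular).\<close>
definition minv :: "complex mat \<Rightarrow> complex mat" where
  "minv X = (SOME Y. Y \<in> carrier_mat (dim_row X) (dim_row X) \<and>
                     X * Y = 1\<^sub>m (dim_row X) \<and> Y * X = 1\<^sub>m (dim_row X))"

definition submult_mat_norm :: "nat \<Rightarrow> (complex mat \<Rightarrow> real) \<Rightarrow> bool" where
  "submult_mat_norm m N \<longleftrightarrow>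
     (\<forall>X \<in> carrier_mat m m. N X \<ge> 0 \<and> (N X = 0 \<longleftrightarrow> X = 0\<^sub>m m m)) \<and>
     (\<forall>X \<in> carrier_mat m m. \<forall>a. N (a \<cdot>\<^sub>m X) = cmod a * N X) \<and>
     (\<forall>X \<in> carrier_mat m m. \<forall>Y \<in> carrier_mat m m. N (X + Y) \<le> N X + N Y) \<and>
     (\<forall>X \<in> carrier_mat m m. \<forall>Y \<in> carrier_mat m m. N (X * Y) \<le> N X * N Y)"

text \<open>Block matrix (n x n blocks, each m x m); blocks indexed 1..n:
  block (i,j) is blk i j.\<close>
definition block_mat :: "nat \<Rightarrow> nat \<Rightarrow> (nat \<Rightarrow> nat \<Rightarrow> complex mat) \<Rightarrow> complex mat" where
  "block_mat n m blk = mat (n*m) (n*m)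
     (\<lambda>(r,c). blk (r div m + 1) (c div m + 1) $$ (r mod m, c mod m))"

definition tridiag_blocks :: "nat \<Rightarrow> (nat \<Rightarrow> complex mat) \<Rightarrow> (nat \<Rightarrow> complex mat) \<Rightarrow>
    (nat \<Rightarrow> complex mat) \<Rightarrow> nat \<Rightarrow> nat \<Rightarrow> complex mat" where
  "tridiag_blocks m A B C i j =
     (if i = j then A i else if j = i + 1 then B i else if i = j + 1 then C j else 0\<^sub>m m m)"

definition row_block_diag_dom ::
    "nat \<Rightarrow> (complex mat \<Rightarrow> real) \<Rightarrow> (nat \<Rightarrow> nat \<Rightarrow> complex mat) \<Rightarrow> bool" where
  "row_block_diag_dom n N blk \<longleftrightarrow>
     (\<forall>i \<in> {1..n}. invertible_mat (blk i i) \<and>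
        (\<Sum>j \<in> {1..n} - {i}. N (minv (blk i i) * blk i j)) \<le> 1)"

fun Useq :: "(nat \<Rightarrow> complex mat) \<Rightarrow> (nat \<Rightarrow> complex mat) \<Rightarrow> (nat \<Rightarrow> complex mat) \<Rightarrow>
    nat \<Rightarrow> nat \<Rightarrow> complex mat" where
  "Useq A B C m 0 = 0\<^sub>m m m"
| "Useq A B C m (Suc 0) = 1\<^sub>m m"
| "Useq A B C m (Suc (Suc 0)) = - (minv (B 1) * A 1 * Useq A B C m 1)"
| "Useq A B C m (Suc (Suc (Suc k))) =
     - (minv (B (k+2)) * (C (k+1) * Useq A B C m (k+1) + A (k+2) * Useq A B C m (k+2)))"

fun Xseq :: "(nat \<Rightarrow> complex mat) \<Rightarrow> (nat \<Rightarrow> complex mat) \<Rightarrow> (nat \<Rightarrow> complex mat) \<Rightarrow>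
    nat \<Rightarrow> nat \<Rightarrow> complex mat" where
  "Xseq A B C m 0 = 0\<^sub>m m m"
| "Xseq A B C m (Suc 0) = 1\<^sub>m m"
| "Xseq A B C m (Suc (Suc 0)) = - (Xseq A B C m 1 * A 1 * minv (C 1))"
| "Xseq A B C m (Suc (Suc (Suc k))) =
     - ((Xseq A B C m (k+1) * B (k+1) + Xseq A B C m (k+2) * A (k+2)) * minv (C (k+2)))"

text \<open>Ybw n k = Y_(n-k), computed backwards from Y_n.\<close>
fun Ybw :: "(nat \<Rightarrow> complex mat) \<Rightarrow> (nat \<Rightarrow> complex mat) \<Rightarrow> (nat \<Rightarrow> complex mat) \<Rightarrow>
    nat \<Rightarrow> nat \<Rightarrow> nat \<Rightarrow> complex mat" where
  "Ybw A B C m n 0 = minv (Xseq A B C m n * A n + Xseq A B C m (n-1) * B (n-1))"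
| "Ybw A B C m n (Suc 0) = - (minv (C (n-1)) * A n * Ybw A B C m n 0)"
| "Ybw A B C m n (Suc (Suc k)) =
     - (minv (C (n-k-2)) * (A (n-k-1) * Ybw A B C m n (Suc k) + B (n-k-1) * Ybw A B C m n k))"

definition Yseq :: "(nat \<Rightarrow> complex mat) \<Rightarrow> (nat \<Rightarrow> complex mat) \<Rightarrow> (nat \<Rightarrow> complex mat) \<Rightarrow>
    nat \<Rightarrow> nat \<Rightarrow> nat \<Rightarrow> complex mat" where
  "Yseq A B C m n i = Ybw A B C m n (n - i)"

end

theory Submission
  imports Defs "Jordan_Normal_Form.Determinant"
begin

text \<open>
  Both U and Y solve the block row equations C_(i-1) W_(i-1) + A_i W_i + B_i W_(i+1) = 0
  of A, U on rows 1..n-1 and Y on rows 2..n. Multiplying by A_i^-1 and taking norms gives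
  |W_i| <= a_i |W_(i-1)| + b_i |W_(i+1)| with a_i = |A_i^-1 C_(i-1)|, b_i = |A_i^-1 B_i|; both
  are positive as B_i, C_i are nonsingular, and a_i + b_i <= 1 by diagonal dominance. Such an
  inequality propagates strict increase: |W_(i-1)| < |W_i| forces |W_i| < |W_(i+1)|. The end
  rows, which lack one neighbour, start the chain: |U_1| <= b_1 |U_2| with b_1 < 1, and
  symmetrically |Y_n| <= a_n |Y_(n-1)| with a_n < 1, read from right to left.

  For Y this needs Y_n = S^-1 to be nonzero, S = X_n A_n + X_(n-1) B_(n-1), so S must be
  nonsingular. The X_i solve the block column equations of A, so [X_1 ... X_n] A = [0 ... 0 S];
  since X_1 = I and A is nonsingular, the first block of [0 ... 0 S] A^-1 is the identity,
  which exhibits a right inverse of S.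
\<close>

section \<open>Inverse matrices\<close>

lemma invertible_mat_ex_inverse:
  assumes "P \<in> carrier_mat k k" and "invertible_mat P"
  shows "\<exists>Q \<in> carrier_mat k k. P * Q = 1\<^sub>m k \<and> Q * P = 1\<^sub>m k"
proof -
  from assms(2) obtain Q where PQ: "P * Q = 1\<^sub>m (dim_row P)" and QP: "Q * P = 1\<^sub>m (dim_row Q)"
    unfolding invertible_mat_def inverts_mat_def by blast
  have "Q \<in> carrier_mat k k"
    using arg_cong[OF PQ, of dim_col] arg_cong[OF QP, of dim_col] assms(1) by auto
  with PQ QP assms(1) show ?thesis by auto
qed

lemma
  assumes "P \<in> carrier_mat k k" and "invertible_mat P"
  shows minv_carrier: "minv P \<in> carrier_mat k k"
    and mult_minv: "P * minv P = 1\<^sub>m k"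
    and minv_mult: "minv P * P = 1\<^sub>m k"
proof -
  have "\<exists>Q. Q \<in> carrier_mat (dim_row P) (dim_row P) \<and> P * Q = 1\<^sub>m (dim_row P) \<and> Q * P = 1\<^sub>m (dim_row P)"
    using invertible_mat_ex_inverse[OF assms] assms(1) by auto
  from someI_ex[OF this] assms(1)
  show "minv P \<in> carrier_mat k k" "P * minv P = 1\<^sub>m k" "minv P * P = 1\<^sub>m k"
    unfolding minv_def by auto
qed

lemma invertible_minv:
  assumes "P \<in> carrier_mat k k" and "invertible_mat P"
  shows "invertible_mat (minv P)"
  using minv_carrier[OF assms] mult_minv[OF assms] minv_mult[OF assms] assms(1)
  unfolding invertible_mat_def inverts_mat_def by auto

lemma eq_neg_minv_mult:
  assumes "P \<in> carrier_mat k k" "invertible_mat P" "W \<in> carrier_mat k l" "Z \<in> carrier_mat k l"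
    and "P * W + Z = 0\<^sub>m k l"
  shows "W = - (minv P * Z)"
proof -
  have PW: "P * W = - Z"
  proof (rule eq_matI)
    fix i j assume "i < dim_row (- Z)" "j < dim_col (- Z)"
    with arg_cong[OF assms(5), of "\<lambda>M. M $$ (i, j)"] assms(1,3,4)
    show "(P * W) $$ (i, j) = (- Z) $$ (i, j)" by (simp add: eq_neg_iff_add_eq_0)
  qed (use assms in auto)
  have "W = (minv P * P) * W"
    using minv_mult[OF assms(1,2)] assms(3) by simp
  also have "\<dots> = minv P * (P * W)"
    using minv_carrier[OF assms(1,2)] assms(1,3) by (rule assoc_mult_mat)
  finally show ?thesis
    unfolding PW using minv_carrier[OF assms(1,2)] assms(4) by simp
qed

text \<open>Unlike mult_carrier_mat, this rule has no free middle dimension, so the simplifier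
  can use it.\<close>

lemma mult_carrier_mat_square [simp]:
  "P \<in> carrier_mat k k \<Longrightarrow> Q \<in> carrier_mat k k \<Longrightarrow> P * Q \<in> carrier_mat k k"
  by simp

lemma mult_neg_minv_add_cancel:
  assumes "Q \<in> carrier_mat k k" "invertible_mat Q" "Z \<in> carrier_mat k l"
  shows "Q * (- (minv Q * Z)) + Z = 0\<^sub>m k l"
proof -
  have "Q * (minv Q * Z) = Z"
    using assms minv_carrier[OF assms(1,2)] mult_minv[OF assms(1,2)]
    by (simp add: assoc_mult_mat[symmetric])
  then show ?thesis
    using assms minv_carrier[OF assms(1,2)] by simp
qed

lemma neg_mult_minv_mult_add_cancel:
  assumes "Q \<in> carrier_mat k k" "invertible_mat Q" "Z \<in> carrier_mat l k"
  shows "(- (Z * minv Q)) * Q + Z = 0\<^sub>m l k"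
proof -
  have "(Z * minv Q) * Q = Z"
    using assms minv_carrier[OF assms(1,2)] minv_mult[OF assms(1,2)] by simp
  then show ?thesis
    using assms minv_carrier[OF assms(1,2)] by simp
qed

lemma invertible_mat_nonzero:
  assumes "(P :: 'a :: semiring_1 mat) \<in> carrier_mat k k" "invertible_mat P" "k \<ge> 1"
  shows "P \<noteq> 0\<^sub>m k k"
proof
  assume "P = 0\<^sub>m k k"
  with invertible_mat_ex_inverse[OF assms(1,2)] have "(1\<^sub>m k :: 'a mat) = 0\<^sub>m k k" by auto
  then have "(1\<^sub>m k :: 'a mat) $$ (0, 0) = 0\<^sub>m k k $$ (0, 0)" by simp
  with assms(3) show False by simp
qed

lemma minv_mult_nonzero:
  assumes "P \<in> carrier_mat k k" "invertible_mat P" "Q \<in> carrier_mat k k" "invertible_mat Q" "k \<ge> 1"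
  shows "minv P * Q \<noteq> 0\<^sub>m k k"
proof
  assume zero: "minv P * Q = 0\<^sub>m k k"
  have "Q = (P * minv P) * Q"
    using mult_minv[OF assms(1,2)] assms(3) by simp
  also have "\<dots> = P * (minv P * Q)"
    using assms(1) minv_carrier[OF assms(1,2)] assms(3) by (rule assoc_mult_mat)
  finally have "Q = 0\<^sub>m k k"
    unfolding zero using assms(1) by simp
  with invertible_mat_nonzero[OF assms(3-5)] show False ..
qed

lemma minv_nonzero:
  assumes "P \<in> carrier_mat k k" "invertible_mat P" "k \<ge> 1"
  shows "minv P \<noteq> 0\<^sub>m k k"
  by (rule invertible_mat_nonzero[OF minv_carrier[OF assms(1,2)] invertible_minv[OF assms(1,2)] assms(3)])

section \<open>Submultiplicative norms\<close>

lemma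
  assumes "submult_mat_norm m N"
  shows submult_norm_nonneg: "X \<in> carrier_mat m m \<Longrightarrow> N X \<ge> 0"
    and submult_norm_zero: "N (0\<^sub>m m m) = 0"
    and submult_norm_pos: "X \<in> carrier_mat m m \<Longrightarrow> X \<noteq> 0\<^sub>m m m \<Longrightarrow> N X > 0"
    and submult_norm_add: "X \<in> carrier_mat m m \<Longrightarrow> Y \<in> carrier_mat m m \<Longrightarrow> N (X + Y) \<le> N X + N Y"
    and submult_norm_mult: "X \<in> carrier_mat m m \<Longrightarrow> Y \<in> carrier_mat m m \<Longrightarrow> N (X * Y) \<le> N X * N Y"
  using assms unfolding submult_mat_norm_def by (auto simp: order_less_le)

lemma submult_norm_uminus:
  assumes "submult_mat_norm m N" "X \<in> carrier_mat m m"
  shows "N (- X) = N X"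
proof -
  have "- X = (-1) \<cdot>\<^sub>m X"
    using assms(2) by (intro eq_matI) auto
  with assms show ?thesis
    unfolding submult_mat_norm_def by auto
qed

lemma strict_increase_step:
  fixes x y z a b :: real
  assumes "x < y" "y \<le> a * x + b * z" "0 < a" "0 \<le> b" "a + b \<le> 1" "0 \<le> z"
  shows "y < z"
proof -
  have "(1 - a) * y < b * z"
    using assms(2) mult_strict_left_mono[OF assms(1,3)] by (simp add: algebra_simps)
  also have "\<dots> \<le> (1 - a) * z"
    using assms(5,6) by (intro mult_right_mono) auto
  finally show ?thesis
    using assms(4,5) by (simp add: mult_less_cancel_left)
qed

lemma submult_norm_row_bound:
  assumes norm: "submult_mat_norm m N"
    and car: "A \<in> carrier_mat m m" "B \<in> carrier_mat m m" "C \<in> carrier_mat m m"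
      "V \<in> carrier_mat m m" "W \<in> carrier_mat m m" "V' \<in> carrier_mat m m"
    and "invertible_mat A"
    and row: "C * V + A * W + B * V' = 0\<^sub>m m m"
  shows "N W \<le> N (minv A * C) * N V + N (minv A * B) * N V'"
proof -
  have Ainv: "minv A \<in> carrier_mat m m"
    using minv_carrier[OF car(1) \<open>invertible_mat A\<close>] .
  have "A * W + (C * V + B * V') = C * V + A * W + B * V'"
    using car by (intro eq_matI) (auto simp: add_ac)
  with row have "A * W + (C * V + B * V') = 0\<^sub>m m m" by simp
  then have "W = - (minv A * (C * V + B * V'))"
    using car \<open>invertible_mat A\<close> by (intro eq_neg_minv_mult) auto
  also have "\<dots> = - ((minv A * C) * V + (minv A * B) * V')"
    using car Ainv by (simp add: mult_add_distrib_mat[of "minv A" m m "C * V" m "B * V'"])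
  finally have "N W = N ((minv A * C) * V + (minv A * B) * V')"
    using car Ainv by (simp add: submult_norm_uminus[OF norm])
  also have "\<dots> \<le> N ((minv A * C) * V) + N ((minv A * B) * V')"
    using car Ainv by (intro submult_norm_add[OF norm]) auto
  also have "\<dots> \<le> N (minv A * C) * N V + N (minv A * B) * N V'"
    using car Ainv
    by (intro add_mono submult_norm_mult[OF norm]) auto
  finally show ?thesis .
qed

lemma submult_norm_end_row_bound:
  assumes norm: "submult_mat_norm m N"
    and car: "A \<in> carrier_mat m m" "B \<in> carrier_mat m m" "W \<in> carrier_mat m m" "V \<in> carrier_mat m m"
    and "invertible_mat A"
    and row: "A * W + B * V = 0\<^sub>m m m"
  shows "N W \<le> N (minv A * B) * N V"
  using submult_norm_row_bound[OF norm car(1,2) zero_carrier_mat zero_carrier_mat car(3,4)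
      \<open>invertible_mat A\<close>] row car minv_carrier[OF car(1) \<open>invertible_mat A\<close>]
  by (simp add: submult_norm_zero[OF norm])

section \<open>Block rows\<close>

definition block_row :: "nat \<Rightarrow> nat \<Rightarrow> (nat \<Rightarrow> complex mat) \<Rightarrow> complex mat" where
  "block_row n m R = mat m (n*m) (\<lambda>(k, c). R (c div m + 1) $$ (k, c mod m))"

lemma block_index_less:
  fixes i p n m :: nat
  assumes "i < n" "p < m"
  shows "i * m + p < n * m"
proof -
  have "i * m + p < Suc i * m" using assms(2) by simp
  also have "\<dots> \<le> n * m" using assms(1) by (intro mult_right_mono) auto
  finally show ?thesis .
qed

lemma dim_block_row [simp]:
  "dim_row (block_row n m R) = m" "dim_col (block_row n m R) = n*m"
  unfolding block_row_def by simp_all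

lemma block_row_carrier: "block_row n m R \<in> carrier_mat m (n*m)"
  by (simp add: carrier_matI)

lemma block_row_index:
  assumes "k < m" "i < n" "p < m"
  shows "block_row n m R $$ (k, i*m + p) = R (i+1) $$ (k, p)"
  using assms block_index_less[OF assms(2,3)] unfolding block_row_def by simp

lemma dim_block_mat [simp]:
  "dim_row (block_mat n m blk) = n*m" "dim_col (block_mat n m blk) = n*m"
  unfolding block_mat_def by simp_all

lemma block_mat_carrier: "block_mat n m blk \<in> carrier_mat (n*m) (n*m)"
  by (simp add: carrier_matI)

lemma block_mat_index:
  assumes "i < n" "p < m" "j < n" "q < m"
  shows "block_mat n m blk $$ (i*m + p, j*m + q) = blk (i+1) (j+1) $$ (p, q)"
  using assms block_index_less[OF assms(1,2)] block_index_less[OF assms(3,4)]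
  unfolding block_mat_def by simp

lemma sum_lessThan_mult_blocks:
  fixes f :: "nat \<Rightarrow> 'a :: comm_monoid_add"
  shows "(\<Sum>r<n*m. f r) = (\<Sum>i<n. \<Sum>p<m. f (i*m + p))"
proof -
  have "sum f {i*m..<i*m + m} = (\<Sum>p<m. f (i*m + p))" for i
    using sum.shift_bounds_nat_ivl[of f 0 "i*m" m] by (simp add: atLeast0LessThan add.commute)
  then show ?thesis
    by (simp add: sum.nat_group[symmetric])
qed

lemma block_row_mult_block_mat_index:
  assumes R: "\<And>i. 1 \<le> i \<Longrightarrow> i \<le> n \<Longrightarrow> R i \<in> carrier_mat m m"
    and blk: "\<And>i. 1 \<le> i \<Longrightarrow> i \<le> n \<Longrightarrow> blk i (j+1) \<in> carrier_mat m m"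
    and "k < m" "j < n" "q < m"
  shows "(block_row n m R * block_mat n m blk) $$ (k, j*m + q)
    = (\<Sum>i\<in>{1..n}. (R i * blk i (j+1)) $$ (k, q))"
proof -
  have "(block_row n m R * block_mat n m blk) $$ (k, j*m + q)
      = (\<Sum>r<n*m. block_row n m R $$ (k, r) * block_mat n m blk $$ (r, j*m + q))"
    using assms(3-5) block_index_less[OF assms(4,5)] block_row_carrier[of n m R]
      block_mat_carrier[of n m blk]
    by (simp add: scalar_prod_def atLeast0LessThan)
  also have "\<dots> = (\<Sum>i<n. \<Sum>p<m. R (i+1) $$ (k, p) * blk (i+1) (j+1) $$ (p, q))"
    using assms(3-5) by (simp add: sum_lessThan_mult_blocks block_row_index block_mat_index)
  also have "\<dots> = (\<Sum>i<n. (R (i+1) * blk (i+1) (j+1)) $$ (k, q))"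
  proof (intro sum.cong refl)
    fix i assume "i \<in> {..<n}"
    then have "R (i+1) \<in> carrier_mat m m" "blk (i+1) (j+1) \<in> carrier_mat m m"
      using R blk by auto
    with assms(3,5) show "(\<Sum>p<m. R (i+1) $$ (k, p) * blk (i+1) (j+1) $$ (p, q))
        = (R (i+1) * blk (i+1) (j+1)) $$ (k, q)"
      by (simp add: scalar_prod_def atLeast0LessThan)
  qed
  also have "\<dots> = (\<Sum>i\<in>{1..n}. (R i * blk i (j+1)) $$ (k, q))"
    by (simp add: sum.atLeast1_atMost_eq)
  finally show ?thesis .
qed

lemma invertible_last_block:
  assumes M: "M \<in> carrier_mat (n*m) (n*m)" "invertible_mat M" and "n \<ge> 1"
    and S: "S \<in> carrier_mat m m" and R1: "R 1 = 1\<^sub>m m"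
    and prod: "block_row n m R * M = block_row n m (\<lambda>j. if j = n then S else 0\<^sub>m m m)"
  shows "invertible_mat S"
proof -
  define Q where "Q = block_row n m (\<lambda>j. if j = n then S else 0\<^sub>m m m)"
  \<comment> \<open>the block (n, 1) of M^-1; the first block of R = Q M^-1 reads 1 = S T\<close>
  define T where "T = mat m m (\<lambda>(p, c). minv M $$ ((n-1)*m + p, c))"
  have Minv: "minv M \<in> carrier_mat (n*m) (n*m)" "M * minv M = 1\<^sub>m (n*m)"
    using minv_carrier[OF M] mult_minv[OF M] by auto
  have "block_row n m R = block_row n m R * (M * minv M)"
    using Minv block_row_carrier[of n m R] by simp
  also have "\<dots> = (block_row n m R * M) * minv M"
    by (rule assoc_mult_mat[symmetric, OF block_row_carrier M(1) Minv(1)])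
  also have "\<dots> = Q * minv M"
    unfolding prod Q_def ..
  finally have R: "block_row n m R = Q * minv M" .
  have "S * T = 1\<^sub>m m"
  proof (rule eq_matI)
    fix k c assume "k < dim_row (1\<^sub>m m :: complex mat)" "c < dim_col (1\<^sub>m m :: complex mat)"
    then have kc: "k < m" "c < m" by auto
    have "1\<^sub>m m $$ (k, c) = block_row n m R $$ (k, 0*m + c)"
      using kc \<open>n \<ge> 1\<close> R1 block_row_index[of k m 0 n c R] by simp
    also have "\<dots> = (\<Sum>r<n*m. Q $$ (k, r) * minv M $$ (r, c))"
      unfolding R using kc Minv(1) \<open>n \<ge> 1\<close> block_index_less[of 0 n c m] unfolding Q_def
      by (simp add: block_row_carrier scalar_prod_def atLeast0LessThan)
    also have "\<dots> = (\<Sum>i<n. \<Sum>p<m. Q $$ (k, i*m + p) * minv M $$ (i*m + p, c))"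
      by (rule sum_lessThan_mult_blocks)
    also have "\<dots> = (\<Sum>i<n. if i = n-1 then (\<Sum>p<m. S $$ (k, p) * T $$ (p, c)) else 0)"
      using kc unfolding Q_def T_def by (intro sum.cong refl) (auto simp: block_row_index)
    also have "\<dots> = (S * T) $$ (k, c)"
      using kc S \<open>n \<ge> 1\<close> unfolding T_def by (simp add: scalar_prod_def atLeast0LessThan)
    finally show "(S * T) $$ (k, c) = 1\<^sub>m m $$ (k, c)" ..
  qed (use S in \<open>auto simp: T_def\<close>)
  moreover have "T * S = 1\<^sub>m m"
    using mat_mult_left_right_inverse[OF S _ calculation] by (simp add: T_def)
  ultimately show ?thesis
    using S unfolding invertible_mat_def inverts_mat_def by (auto intro!: exI[of _ T] simp: T_def)
qed

section \<open>Block tridiagonal matrices\<close>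

locale block_tridiag =
  fixes m n :: nat and A B C :: "nat \<Rightarrow> complex mat"
  assumes m_pos: "m \<ge> 1" and n_ge_2: "n \<ge> 2"
    and A_carrier [simp]: "\<And>i. 1 \<le> i \<Longrightarrow> i \<le> n \<Longrightarrow> A i \<in> carrier_mat m m"
    and B_carrier [simp]: "\<And>i. 1 \<le> i \<Longrightarrow> i < n \<Longrightarrow> B i \<in> carrier_mat m m"
    and C_carrier [simp]: "\<And>i. 1 \<le> i \<Longrightarrow> i < n \<Longrightarrow> C i \<in> carrier_mat m m"
    and A_invertible: "\<And>i. 1 \<le> i \<Longrightarrow> i \<le> n \<Longrightarrow> invertible_mat (A i)"
    and B_invertible: "\<And>i. 1 \<le> i \<Longrightarrow> i < n \<Longrightarrow> invertible_mat (B i)"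
    and C_invertible: "\<And>i. 1 \<le> i \<Longrightarrow> i < n \<Longrightarrow> invertible_mat (C i)"
begin

abbreviation "U \<equiv> Useq A B C m"
abbreviation "X \<equiv> Xseq A B C m"
definition S :: "complex mat" where "S = X n * A n + X (n-1) * B (n-1)"

lemma minv_A_carrier [simp]: "1 \<le> i \<Longrightarrow> i \<le> n \<Longrightarrow> minv (A i) \<in> carrier_mat m m"
  using minv_carrier A_invertible by simp

lemma minv_B_carrier [simp]: "1 \<le> i \<Longrightarrow> i < n \<Longrightarrow> minv (B i) \<in> carrier_mat m m"
  using minv_carrier B_invertible by simp

lemma minv_C_carrier [simp]: "1 \<le> i \<Longrightarrow> i < n \<Longrightarrow> minv (C i) \<in> carrier_mat m m"
  using minv_carrier C_invertible by simp

lemmas dim_blocks [simp] =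
  A_carrier[THEN carrier_matD(1)] A_carrier[THEN carrier_matD(2)]
  B_carrier[THEN carrier_matD(1)] B_carrier[THEN carrier_matD(2)]
  C_carrier[THEN carrier_matD(1)] C_carrier[THEN carrier_matD(2)]
  minv_A_carrier[THEN carrier_matD(1)] minv_A_carrier[THEN carrier_matD(2)]
  minv_B_carrier[THEN carrier_matD(1)] minv_B_carrier[THEN carrier_matD(2)]
  minv_C_carrier[THEN carrier_matD(1)] minv_C_carrier[THEN carrier_matD(2)]

lemma U_carrier [simp]: "i \<le> n \<Longrightarrow> U i \<in> carrier_mat m m"
proof (induction i rule: less_induct)
  case (less i)
  show ?case
  proof (cases "i \<le> 2")
    case True
    then have "i = 0 \<or> i = 1 \<or> i = 2" by auto
    with n_ge_2 show ?thesis by (auto simp: numeral_2_eq_2)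
  next
    case False
    then have "i = Suc (Suc (Suc (i - 3)))" by simp
    then obtain k where i: "i = Suc (Suc (Suc k))" by blast
    with less show ?thesis
      using less.IH[of "k+1"] less.IH[of "k+2"] by simp
  qed
qed

lemmas dim_U [simp] = U_carrier[THEN carrier_matD(1)] U_carrier[THEN carrier_matD(2)]

lemma U_first_row: "A 1 * U 1 + B 1 * U 2 = 0\<^sub>m m m"
proof -
  have "B 1 * U 2 + A 1 * U 1 = 0\<^sub>m m m"
    using mult_neg_minv_add_cancel[of "B 1" m "A 1" m] n_ge_2 B_invertible
    by (simp add: numeral_2_eq_2)
  moreover have "B 1 * U 2 + A 1 * U 1 = A 1 * U 1 + B 1 * U 2"
    using n_ge_2 by (intro comm_add_mat) auto
  ultimately show ?thesis by simp
qed

lemma U_row: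
  assumes "2 \<le> i" "i < n"
  shows "C (i-1) * U (i-1) + A i * U i + B i * U (i+1) = 0\<^sub>m m m"
proof -
  obtain k where i: "i = k + 2" using assms(1) by (metis add.commute le_Suc_ex)
  have "B i * U (i+1) + (C (i-1) * U (i-1) + A i * U i) = 0\<^sub>m m m"
    using mult_neg_minv_add_cancel[of "B i" m "C (i-1) * U (i-1) + A i * U i" m]
      assms B_invertible unfolding i by (simp add: numeral_2_eq_2)
  moreover have "B i * U (i+1) + (C (i-1) * U (i-1) + A i * U i)
      = C (i-1) * U (i-1) + A i * U i + B i * U (i+1)"
    using assms by (intro comm_add_mat) auto
  ultimately show ?thesis by simp
qed

lemma X_carrier [simp]: "i \<le> n \<Longrightarrow> X i \<in> carrier_mat m m"
proof (induction i rule: less_induct)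
  case (less i)
  show ?case
  proof (cases "i \<le> 2")
    case True
    then have "i = 0 \<or> i = 1 \<or> i = 2" by auto
    with n_ge_2 show ?thesis by (auto simp: numeral_2_eq_2)
  next
    case False
    then have "i = Suc (Suc (Suc (i - 3)))" by simp
    then obtain k where i: "i = Suc (Suc (Suc k))" by blast
    with less show ?thesis
      using less.IH[of "k+1"] less.IH[of "k+2"] by simp
  qed
qed

lemmas dim_X [simp] = X_carrier[THEN carrier_matD(1)] X_carrier[THEN carrier_matD(2)]

lemma X_first_column: "X 1 * A 1 + X 2 * C 1 = 0\<^sub>m m m"
proof -
  have "X 2 * C 1 + X 1 * A 1 = 0\<^sub>m m m"
    using neg_mult_minv_mult_add_cancel[of "C 1" m "X 1 * A 1" m] n_ge_2 C_invertible
    by (simp add: numeral_2_eq_2)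
  moreover have "X 2 * C 1 + X 1 * A 1 = X 1 * A 1 + X 2 * C 1"
    using n_ge_2 by (intro comm_add_mat) auto
  ultimately show ?thesis by simp
qed

lemma X_column:
  assumes "2 \<le> j" "j < n"
  shows "X (j-1) * B (j-1) + X j * A j + X (j+1) * C j = 0\<^sub>m m m"
proof -
  obtain k where j: "j = k + 2" using assms(1) by (metis add.commute le_Suc_ex)
  have "X (j+1) * C j + (X (j-1) * B (j-1) + X j * A j) = 0\<^sub>m m m"
    using neg_mult_minv_mult_add_cancel[of "C j" m "X (j-1) * B (j-1) + X j * A j" m]
      assms C_invertible unfolding j by (simp add: numeral_2_eq_2)
  moreover have "X (j+1) * C j + (X (j-1) * B (j-1) + X j * A j)
      = X (j-1) * B (j-1) + X j * A j + X (j+1) * C j"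
    using assms by (intro comm_add_mat) auto
  ultimately show ?thesis by simp
qed

lemma tridiag_column_sum:
  assumes R: "\<And>i. 1 \<le> i \<Longrightarrow> i \<le> n \<Longrightarrow> R i \<in> carrier_mat m m"
    and j: "1 \<le> j" "j \<le> n" and kq: "k < m" "q < m"
  shows "(\<Sum>i\<in>{1..n}. (R i * tridiag_blocks m A B C i j) $$ (k, q))
    = (if j = 1 then 0 else (R (j-1) * B (j-1)) $$ (k, q)) + (R j * A j) $$ (k, q)
      + (if j = n then 0 else (R (j+1) * C j) $$ (k, q))"
proof -
  have "(R i * tridiag_blocks m A B C i j) $$ (k, q)
      = (if j \<noteq> 1 \<and> i = j - 1 then (R i * B i) $$ (k, q) else 0)
        + (if i = j then (R i * A i) $$ (k, q) else 0)
        + (if i = j + 1 then (R i * C j) $$ (k, q) else 0)" if "i \<in> {1..n}" for i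
    using that j kq R[of i] by (auto simp: tridiag_blocks_def)
  then show ?thesis
    using j by (auto simp: sum.distrib)
qed

lemma X_block_column:
  assumes "1 \<le> j" "j \<le> n" "k < m" "q < m"
  shows "(\<Sum>i\<in>{1..n}. (X i * tridiag_blocks m A B C i j) $$ (k, q))
    = (if j = n then S $$ (k, q) else 0)"
proof -
  have sum: "(\<Sum>i\<in>{1..n}. (X i * tridiag_blocks m A B C i j) $$ (k, q))
    = (if j = 1 then 0 else (X (j-1) * B (j-1)) $$ (k, q)) + (X j * A j) $$ (k, q)
      + (if j = n then 0 else (X (j+1) * C j) $$ (k, q))"
    by (rule tridiag_column_sum) (use assms in simp_all)
  consider "j = 1" | "2 \<le> j" "j < n" | "j = n"
    using assms(1,2) by linarith
  then show ?thesis
  proof cases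
    case 1
    then show ?thesis
      unfolding sum using n_ge_2 assms arg_cong[OF X_first_column, of "\<lambda>M. M $$ (k, q)"]
      by (simp add: numeral_2_eq_2 del: Xseq.simps)
  next
    case 2
    then show ?thesis
      unfolding sum using assms arg_cong[OF X_column[OF 2], of "\<lambda>M. M $$ (k, q)"]
      by (simp del: Xseq.simps)
  next
    case 3
    then show ?thesis
      unfolding sum S_def using n_ge_2 assms by simp
  qed
qed

lemma S_carrier [simp]: "S \<in> carrier_mat m m"
  using n_ge_2 by (simp add: S_def)

lemma tridiag_blocks_carrier [simp]:
  "1 \<le> i \<Longrightarrow> i \<le> n \<Longrightarrow> 1 \<le> j \<Longrightarrow> j \<le> n \<Longrightarrow> tridiag_blocks m A B C i j \<in> carrier_mat m m"
  by (simp add: tridiag_blocks_def)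

lemma X_block_row_mult:
  "block_row n m X * block_mat n m (tridiag_blocks m A B C)
    = block_row n m (\<lambda>j. if j = n then S else 0\<^sub>m m m)"
proof (rule eq_matI)
  fix k c
  assume "k < dim_row (block_row n m (\<lambda>j. if j = n then S else 0\<^sub>m m m))"
    and "c < dim_col (block_row n m (\<lambda>j. if j = n then S else 0\<^sub>m m m))"
  then have k: "k < m" and c: "c < n * m" by auto
  define j q where "j = c div m" and "q = c mod m"
  have jq: "c = j * m + q" "j < n" "q < m"
    using c m_pos unfolding j_def q_def by (auto simp: less_mult_imp_div_less)
  have "(block_row n m X * block_mat n m (tridiag_blocks m A B C)) $$ (k, c)
      = (\<Sum>i\<in>{1..n}. (X i * tridiag_blocks m A B C i (j+1)) $$ (k, q))"
    unfolding jq(1) by (rule block_row_mult_block_mat_index) (use k jq in simp_all)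
  also have "\<dots> = (if j + 1 = n then S $$ (k, q) else 0)"
    using k jq by (intro X_block_column) simp_all
  also have "\<dots> = block_row n m (\<lambda>j. if j = n then S else 0\<^sub>m m m) $$ (k, c)"
    unfolding jq(1) using k jq by (simp add: block_row_index)
  finally show "(block_row n m X * block_mat n m (tridiag_blocks m A B C)) $$ (k, c)
      = block_row n m (\<lambda>j. if j = n then S else 0\<^sub>m m m) $$ (k, c)" .
qed auto

lemma row_diag_dom_interior:
  assumes norm: "submult_mat_norm m N" and dom: "row_block_diag_dom n N (tridiag_blocks m A B C)"
    and i: "2 \<le> i" "i < n"
  shows "N (minv (A i) * C (i-1)) + N (minv (A i) * B i) \<le> 1"
proof -
  let ?h = "\<lambda>j. N (minv (A i) * tridiag_blocks m A B C i j)"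
  have "(\<Sum>j\<in>{1..n} - {i}. ?h j) \<le> 1"
    using dom i unfolding row_block_diag_dom_def by (auto simp: tridiag_blocks_def)
  moreover have "(\<Sum>j\<in>{1..n} - {i}. ?h j) = (\<Sum>j\<in>{i-1, i+1}. ?h j)"
  proof (rule sum.mono_neutral_right)
    show "\<forall>j\<in>{1..n} - {i} - {i-1, i+1}. ?h j = 0"
      using i by (auto simp: tridiag_blocks_def submult_norm_zero[OF norm])
  qed (use i in auto)
  moreover have "i - 1 \<noteq> i + 1" by simp
  then have "(\<Sum>j\<in>{i-1, i+1}. ?h j) = ?h (i-1) + ?h (i+1)" by simp
  moreover have "?h (i-1) = N (minv (A i) * C (i-1))" "?h (i+1) = N (minv (A i) * B i)"
    using i by (auto simp: tridiag_blocks_def)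
  ultimately show ?thesis by simp
qed

lemma U_norm_strict_mono:
  assumes norm: "submult_mat_norm m N" and dom: "row_block_diag_dom n N (tridiag_blocks m A B C)"
    and first: "N (minv (A 1) * B 1) < 1"
    and i: "1 \<le> i" "i < n"
  shows "N (U i) < N (U (Suc i))"
  using i
proof (induction i rule: dec_induct)
  case base
  let ?b = "N (minv (A 1) * B 1)"
  have "N (U 1) \<le> ?b * N (U 2)"
    using n_ge_2 A_invertible U_first_row by (intro submult_norm_end_row_bound[OF norm]) auto
  moreover have "invertible_mat (1\<^sub>m m :: complex mat)"
    unfolding invertible_mat_def inverts_mat_def by (simp add: exI[of _ "1\<^sub>m m"])
  then have "N (U 1) > 0"
    using invertible_mat_nonzero[of "1\<^sub>m m" m] m_pos by (intro submult_norm_pos[OF norm]) auto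
  moreover have "?b \<ge> 0" "N (U 2) \<ge> 0"
    using n_ge_2 by (intro submult_norm_nonneg[OF norm]; simp)+
  \<comment> \<open>a step from a zero left neighbour\<close>
  ultimately show ?case
    using strict_increase_step[of 0 "N (U 1)" "1 - ?b" ?b "N (U 2)"] first
    by (simp add: numeral_2_eq_2 del: Useq.simps)
next
  case (step k)
  then have k: "2 \<le> Suc k" "Suc k < n" by auto
  let ?a = "N (minv (A (Suc k)) * C k)" and ?b = "N (minv (A (Suc k)) * B (Suc k))"
  have row: "N (U (Suc k)) \<le> ?a * N (U k) + ?b * N (U (Suc (Suc k)))"
    using k A_invertible U_row[OF k] by (intro submult_norm_row_bound[OF norm]) auto
  have pos: "?a > 0"
    using k A_invertible C_invertible m_pos
    by (intro submult_norm_pos[OF norm] minv_mult_nonzero) auto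
  have nonneg: "?b \<ge> 0" "N (U (Suc (Suc k))) \<ge> 0"
    using k by (intro submult_norm_nonneg[OF norm]; simp)+
  have dom_row: "?a + ?b \<le> 1"
    using row_diag_dom_interior[OF norm dom k] by simp
  have "N (U k) < N (U (Suc k))"
    using step by simp
  then show ?case
    by (rule strict_increase_step[OF _ row pos nonneg(1) dom_row nonneg(2)])
qed
end

locale block_tridiag_nonsingular = block_tridiag +
  assumes nonsingular: "invertible_mat (block_mat n m (tridiag_blocks m A B C))"
begin

lemma S_invertible: "invertible_mat S"
  by (rule invertible_last_block[OF block_mat_carrier nonsingular _ _ _ X_block_row_mult])
    (use n_ge_2 in simp_all)

lemma minv_S_carrier [simp]: "minv S \<in> carrier_mat m m"
  using minv_carrier S_invertible by simp

abbreviation "Y \<equiv> Yseq A B C m n"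

lemma Ybw_0: "Ybw A B C m n 0 = minv S"
  by (simp add: S_def)

declare Ybw.simps(1) [simp del] Ybw_0 [simp]

lemma Ybw_carrier: "k < n \<Longrightarrow> Ybw A B C m n k \<in> carrier_mat m m"
proof (induction k rule: less_induct)
  case (less k)
  show ?case
  proof (cases "k \<le> 1")
    case True
    then have "k = 0 \<or> k = 1" by auto
    with n_ge_2 show ?thesis by auto
  next
    case False
    then have "k = Suc (Suc (k - 2))" by simp
    then obtain l where k: "k = Suc (Suc l)" by blast
    with less show ?thesis
      using less.IH[of "l+1"] less.IH[of l] by simp
  qed
qed

lemma Y_carrier [simp]: "1 \<le> i \<Longrightarrow> i \<le> n \<Longrightarrow> Y i \<in> carrier_mat m m"
  unfolding Yseq_def by (rule Ybw_carrier) simp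

lemmas dim_Y [simp] = Y_carrier[THEN carrier_matD(1)] Y_carrier[THEN carrier_matD(2)]

lemma Y_last_nonzero: "Y n \<noteq> 0\<^sub>m m m"
  using minv_nonzero[OF _ S_invertible m_pos] by (simp add: Yseq_def)

lemma Y_last_row: "A n * Y n + C (n-1) * Y (n-1) = 0\<^sub>m m m"
proof -
  have "Y (n-1) = - (minv (C (n-1)) * (A n * Y n))"
    using n_ge_2 assoc_mult_mat[of "minv (C (n-1))" m m "A n" m "Y n" m] by (simp add: Yseq_def)
  then have "C (n-1) * Y (n-1) + A n * Y n = 0\<^sub>m m m"
    using mult_neg_minv_add_cancel[of "C (n-1)" m "A n * Y n" m] n_ge_2 C_invertible by simp
  moreover have "C (n-1) * Y (n-1) + A n * Y n = A n * Y n + C (n-1) * Y (n-1)"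
    using n_ge_2 by (intro comm_add_mat) auto
  ultimately show ?thesis by simp
qed

lemma Y_row:
  assumes "2 \<le> i" "i < n"
  shows "C (i-1) * Y (i-1) + A i * Y i + B i * Y (i+1) = 0\<^sub>m m m"
proof -
  define k where "k = n - i - 1"
  have k: "n - (i-1) = Suc (Suc k)" "n - i = Suc k" "n - (i+1) = k" "n - k - 2 = i - 1" "n - k - 1 = i"
    using assms unfolding k_def by auto
  have "Y (i-1) = - (minv (C (i-1)) * (A i * Y i + B i * Y (i+1)))"
    unfolding Yseq_def k(1-3) Ybw.simps(3) k(4,5) ..
  then have "C (i-1) * Y (i-1) + (A i * Y i + B i * Y (i+1)) = 0\<^sub>m m m"
    using mult_neg_minv_add_cancel[of "C (i-1)" m "A i * Y i + B i * Y (i+1)" m] assms C_invertible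
    by simp
  moreover have "C (i-1) * Y (i-1) + (A i * Y i + B i * Y (i+1))
      = C (i-1) * Y (i-1) + A i * Y i + B i * Y (i+1)"
    using assms by (intro assoc_add_mat[symmetric]) auto
  ultimately show ?thesis by simp
qed

lemma Y_norm_strict_antimono:
  assumes norm: "submult_mat_norm m N" and dom: "row_block_diag_dom n N (tridiag_blocks m A B C)"
    and last: "N (minv (A n) * C (n-1)) < 1"
    and i: "1 \<le> i" "i \<le> n - 1"
  shows "N (Y (Suc i)) < N (Y i)"
  using i(2,1)
proof (induction i rule: inc_induct)
  case base
  let ?a = "N (minv (A n) * C (n-1))"
  have "N (Y n) \<le> ?a * N (Y (n-1))"
    using n_ge_2 A_invertible Y_last_row by (intro submult_norm_end_row_bound[OF norm]) auto
  moreover have "N (Y n) > 0"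
    using Y_last_nonzero n_ge_2 by (intro submult_norm_pos[OF norm]) simp_all
  moreover have "?a \<ge> 0" "N (Y (n-1)) \<ge> 0"
    using n_ge_2 by (intro submult_norm_nonneg[OF norm]; simp)+
  ultimately show ?case
    using strict_increase_step[of 0 "N (Y n)" "1 - ?a" ?a "N (Y (n-1))"] last n_ge_2
    by (simp del: Yseq_def)
next
  case (step k)
  then have k: "2 \<le> Suc k" "Suc k < n" by auto
  let ?a = "N (minv (A (Suc k)) * C k)" and ?b = "N (minv (A (Suc k)) * B (Suc k))"
  have row: "N (Y (Suc k)) \<le> ?a * N (Y k) + ?b * N (Y (Suc (Suc k)))"
    using k A_invertible Y_row[OF k] by (intro submult_norm_row_bound[OF norm]) auto
  have pos: "?b > 0"
    using k A_invertible B_invertible m_pos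
    by (intro submult_norm_pos[OF norm] minv_mult_nonzero) auto
  have nonneg: "?a \<ge> 0" "N (Y k) \<ge> 0"
    using k by (intro submult_norm_nonneg[OF norm]; simp)+
  have dom_row: "?a + ?b \<le> 1"
    using row_diag_dom_interior[OF norm dom k] by simp
  have "N (Y (Suc (Suc k))) < N (Y (Suc k))"
    using step by simp
  then show ?case
    by (rule strict_increase_step[OF _ _ pos nonneg(1) _ nonneg(2)])
      (use row dom_row in linarith)+
qed
end

theorem lemma2p3:
  fixes m n :: nat and N :: "complex mat \<Rightarrow> real"
    and A B C :: "nat \<Rightarrow> complex mat"
  assumes "m \<ge> 1" and "n \<ge> 2"
    and norm: "submult_mat_norm m N"
    and dimA: "\<forall>i \<in> {1..n}. A i \<in> carrier_mat m m"
    and dimB: "\<forall>i \<in> {1..n-1}. B i \<in> carrier_mat m m"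
    and dimC: "\<forall>i \<in> {1..n-1}. C i \<in> carrier_mat m m"
    and nonsing: "invertible_mat (block_mat n m (tridiag_blocks m A B C))"
    and invB: "\<forall>i \<in> {1..n-1}. invertible_mat (B i)"
    and invC: "\<forall>i \<in> {1..n-1}. invertible_mat (C i)"
    and rbdd: "row_block_diag_dom n N (tridiag_blocks m A B C)"
    and first: "N (minv (A 1) * B 1) < 1"
    and last: "N (minv (A n) * C (n-1)) < 1"
  shows "(\<forall>i \<in> {1..<n}. N (Useq A B C m i) < N (Useq A B C m (Suc i))) \<and>
         (\<forall>i \<in> {1..<n}. N (Yseq A B C m n i) > N (Yseq A B C m n (Suc i)))"
proof -
  have "\<forall>i \<in> {1..n}. invertible_mat (A i)"
    using rbdd unfolding row_block_diag_dom_def tridiag_blocks_def by auto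
  then interpret block_tridiag_nonsingular m n A B C
    using assms by unfold_locales auto
  show ?thesis
    using U_norm_strict_mono[OF norm rbdd first] Y_norm_strict_antimono[OF norm rbdd last]
    by auto
qed

end
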